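(* Let $N\ge2$ and let $(\vartheta_i(t))_{i=1}^N$, $t\ge0$, $\vartheta_i(t)\in\mathbb R$, be a solution of $$\dot\vartheta_i(t)=-\frac1N\sum_{j=1}^N\sin(\vartheta_i(t)-\vartheta_j(t)),\qquad i=1,\dots,N,$$ which is not a stationary solution. Then each $\vartheta_j(t)$ converges to a finite limit $\vartheta_j^*$ as $t\to\infty$, and $(\vartheta_j^* )_{j=1}^N$ is a stationary configuration of type $(N-k,k)$ for some integer $0\le k<N/2$ (complete frequency synchronization). Moreover, if $\vartheta_i(0)\neq\vartheta_j(0)\pmod{2\pi}$ for all $i\neq j$, then the limit configuration is of type $(N,0)$ or $(N-1,1)$, i.e. $k\in\{0,1\}$.
   Context: The order parameters are defined by $R e^{\mathrm{i}\varphi}=\frac1N\sum_{j}e^{\mathrm{i}\vartheta_j}$. A stationary solution is a solution constant in time (mod $2\pi$). A configuration $(\vartheta_j^* )_{j=1}^N$ is of type $(N-k,k)$, $0\le k<N/2$, if there exist $\varphi^*\in\mathbb R$ and $I\subseteq\{1,\dots,N\}$ with $|I|=N-k$ such that $\vartheta_i^*=\varphi^*\pmod{2\pi}$ for $i\in I$ and $\vartheta_i^*=\varphi^*+\pi\pmod{2\pi}$ for $i\notin I$. Type $(N,0)$ is complete phase synchronization. *)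

theory Defs
  imports "HOL-Analysis.Analysis"
begin

definition cong_2pi :: "real \<Rightarrow> real \<Rightarrow> bool" where
  "cong_2pi x y \<longleftrightarrow> (\<exists>m::int. x - y = 2 * pi * of_int m)"

definition kuramoto_rhs :: "nat \<Rightarrow> (nat \<Rightarrow> real) \<Rightarrow> nat \<Rightarrow> real" where
  "kuramoto_rhs N x i = - (1 / real N) * (\<Sum>j<N. sin (x i - x j))"

definition is_solution :: "nat \<Rightarrow> (real \<Rightarrow> nat \<Rightarrow> real) \<Rightarrow> bool" where
  "is_solution N theta \<longleftrightarrow>
     (\<forall>i<N. \<forall>t\<ge>0. ((\<lambda>s. theta s i) has_real_derivative kuramoto_rhs N (theta t) i)
                      (at t within {0..}))"

definition is_stationary_solution :: "nat \<Rightarrow> (real \<Rightarrow> nat \<Rightarrow> real) \<Rightarrow> bool" where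
  "is_stationary_solution N theta \<longleftrightarrow>
     (\<forall>i<N. \<forall>t\<ge>0. cong_2pi (theta t i) (theta 0 i))"

definition config_type :: "nat \<Rightarrow> nat \<Rightarrow> (nat \<Rightarrow> real) \<Rightarrow> bool" where
  "config_type N k x \<longleftrightarrow>
     (\<exists>phi::real. \<exists>I. I \<subseteq> {..<N} \<and> card I = N - k \<and>
        (\<forall>i\<in>I. cong_2pi (x i) phi) \<and>
        (\<forall>i\<in>{..<N} - I. cong_2pi (x i) (phi + pi)))"

end

theory Submission
  imports Defs
begin

(* Writing C + iS = R e^{i phi} for the order parameter, the right-hand side is
   S cos theta_i - C sin theta_i, and the system is a gradient flow of R^2:
   (R^2)' = (2/N) sum_j theta_j'^2.  Hence R^2 increases to a limit R_inf^2, which is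
   positive unless the solution is stationary.  A quantisation argument (the projections
   of the phases onto e^{i phi} are close to +-R whenever the velocities are small) gives
   a Lojasiewicz-type inequality  R_inf^2 - R^2 <= K sum_j theta_j'^2, and then
   theta_j +- c sqrt (R_inf^2 - R^2) are monotone, so every phase converges.  The limit
   is stationary, so all phases sit at phi or phi + pi, and counting with the identity
   sum_j R cos (theta_j - phi) = N R^2 > 0 shows that the majority sits at phi.
   Finally, the cross ratio of half-angle sines of four phases is a constant of motion;
   for pairwise distinct initial phases it forbids two phases at phi and two at phi + pi
   in the limit, so the antipodal cluster has at most one element. *)

section \<open>The order parameter of a configuration\<close>

definition mean_cos :: "nat \<Rightarrow> (nat \<Rightarrow> real) \<Rightarrow> real" where
  "mean_cos N x = (\<Sum>j<N. cos (x j)) / real N"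

definition mean_sin :: "nat \<Rightarrow> (nat \<Rightarrow> real) \<Rightarrow> real" where
  "mean_sin N x = (\<Sum>j<N. sin (x j)) / real N"

abbreviation order_sq :: "nat \<Rightarrow> (nat \<Rightarrow> real) \<Rightarrow> real" where
  "order_sq N x \<equiv> (mean_cos N x)\<^sup>2 + (mean_sin N x)\<^sup>2"

text \<open>The projection \<open>R cos (x\<^sub>i - \<phi>)\<close> of the \<open>i\<close>-th phase onto the order parameter.\<close>
abbreviation alignment :: "nat \<Rightarrow> (nat \<Rightarrow> real) \<Rightarrow> nat \<Rightarrow> real" where
  "alignment N x i \<equiv> mean_cos N x * cos (x i) + mean_sin N x * sin (x i)"

text \<open>The sum of the squared velocities, i.e. the dissipation rate of the gradient flow.\<close>
abbreviation speed_sq :: "nat \<Rightarrow> (nat \<Rightarrow> real) \<Rightarrow> real" where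
  "speed_sq N x \<equiv> \<Sum>j<N. (kuramoto_rhs N x j)\<^sup>2"

lemma kuramoto_rhs_mean_field:
  "kuramoto_rhs N x i = mean_sin N x * cos (x i) - mean_cos N x * sin (x i)"
proof -
  have sum_sin_diff: "(\<Sum>j<N. sin (x i - x j))
      = sin (x i) * (\<Sum>j<N. cos (x j)) - cos (x i) * (\<Sum>j<N. sin (x j))"
    by (simp add: sin_diff sum_subtractf sum_distrib_left)
  show ?thesis
    unfolding kuramoto_rhs_def sum_sin_diff mean_cos_def mean_sin_def by (simp add: divide_inverse algebra_simps)
qed

text \<open>\<open>R \<le> 1\<close>: the squared modulus of the sum is the double sum of \<open>cos (x\<^sub>j - x\<^sub>k) \<le> 1\<close>.\<close>
lemma order_sq_le_1: "order_sq N x \<le> 1"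
proof (cases "N = 0")
  case True
  then show ?thesis by (simp add: mean_cos_def mean_sin_def)
next
  case False
  have "(\<Sum>j<N. cos (x j))\<^sup>2 + (\<Sum>j<N. sin (x j))\<^sup>2 = (\<Sum>j<N. \<Sum>k<N. cos (x j - x k))"
    by (simp add: power2_eq_square sum_product cos_diff sum.distrib[symmetric])
  also have "\<dots> \<le> (\<Sum>j<N. \<Sum>k<N. 1)"
    by (intro sum_mono) auto
  finally have "(\<Sum>j<N. cos (x j))\<^sup>2 + (\<Sum>j<N. sin (x j))\<^sup>2 \<le> (real N)\<^sup>2"
    by (simp add: power2_eq_square)
  then show ?thesis
    using False by (simp add: mean_cos_def mean_sin_def power_divide add_divide_distrib[symmetric])
qed

lemma alignment_rhs_sq: "(alignment N x i)\<^sup>2 + (kuramoto_rhs N x i)\<^sup>2 = order_sq N x"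
proof -
  have "(alignment N x i)\<^sup>2 + (kuramoto_rhs N x i)\<^sup>2
      = order_sq N x * ((sin (x i))\<^sup>2 + (cos (x i))\<^sup>2)"
    by (simp add: kuramoto_rhs_mean_field power2_eq_square ring_distribs
        mult.commute mult.left_commute)
  then show ?thesis by simp
qed

text \<open>Alignments are bounded by \<open>R \<le> 1\<close>; this bounds the coefficient of the cross ratio equation.\<close>
lemma abs_alignment_le_1: "\<bar>alignment N x i\<bar> \<le> 1"
proof -
  have "(alignment N x i)\<^sup>2 \<le> 1"
    using alignment_rhs_sq[of N x i] order_sq_le_1[of N x] zero_le_power2[of "kuramoto_rhs N x i"]
    by linarith
  then show ?thesis by (simp add: abs_square_le_1)
qed

lemma sum_alignment:
  assumes "N > 0"
  shows "(\<Sum>j<N. alignment N x j) = real N * order_sq N x"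
proof -
  have "(\<Sum>j<N. alignment N x j)
      = mean_cos N x * (\<Sum>j<N. cos (x j)) + mean_sin N x * (\<Sum>j<N. sin (x j))"
    by (simp add: sum.distrib sum_distrib_left)
  also have "\<dots> = real N * order_sq N x"
    using assms by (simp add: mean_cos_def mean_sin_def field_simps power2_eq_square)
  finally show ?thesis .
qed

lemma polar_form:
  fixes C S :: real
  obtains phi where "C = sqrt (C\<^sup>2 + S\<^sup>2) * cos phi" and "S = sqrt (C\<^sup>2 + S\<^sup>2) * sin phi"
proof -
  obtain r a where ra: "C = r * cos a" "S = r * sin a" using polar_Ex by blast
  have "C\<^sup>2 + S\<^sup>2 = r\<^sup>2"
    by (simp add: ra power_mult_distrib flip: distrib_left)
  then have norm: "sqrt (C\<^sup>2 + S\<^sup>2) = \<bar>r\<bar>" by simp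
  show ?thesis
  proof (cases "r \<ge> 0")
    case True
    then have "C = \<bar>r\<bar> * cos a" "S = \<bar>r\<bar> * sin a" using ra by simp_all
    then show ?thesis using that[of a] unfolding norm by blast
  next
    case False
    then have "C = \<bar>r\<bar> * cos (a + pi)" "S = \<bar>r\<bar> * sin (a + pi)" using ra by simp_all
    then show ?thesis using that[of "a + pi"] unfolding norm by blast
  qed
qed

subsection \<open>Counting and the quantisation of \<open>R\<close>\<close>

lemma card_lessThan_compl:
  "card {j. j < N \<and> \<not> p j} = N - card {j. j < N \<and> p j}"
proof -
  have "{j. j < N \<and> \<not> p j} = {..<N} - {j. j < N \<and> p j}" by auto
  then show ?thesis by (simp add: card_Diff_subset subset_eq)
qed

lemma sum_signs:
  "(\<Sum>j<N. if p j then 1 else -1 :: real) = 2 * real (card {j. j < N \<and> p j}) - real N"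
proof -
  have cards: "card {j. j < N \<and> p j} \<le> N"
    using card_mono[of "{..<N}" "{j. j < N \<and> p j}"] by auto
  have "(\<Sum>j<N. if p j then 1 else -1 :: real)
      = real (card {j. j < N \<and> p j}) - real (card {j. j < N \<and> \<not> p j})"
    by (simp add: sum.If_cases Int_def)
  then show ?thesis using cards by (simp add: card_lessThan_compl of_nat_diff)
qed

lemma sign_deviation:
  fixes g v R :: real
  assumes R: "R > 0" and circle: "g\<^sup>2 + v\<^sup>2 = R\<^sup>2"
  shows "\<bar>g - R * (if g \<ge> 0 then 1 else -1)\<bar> \<le> v\<^sup>2 / R"
proof -
  have le: "\<bar>g\<bar> \<le> R"
    using circle R by (metis abs_le_square_iff abs_of_pos le_add_same_cancel1 zero_le_power2)
  have "\<bar>g - R * (if g \<ge> 0 then 1 else -1)\<bar> * R = (R - \<bar>g\<bar>) * R"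
    using le by auto
  also have "\<dots> \<le> (R - \<bar>g\<bar>) * (R + \<bar>g\<bar>)"
    using le by (intro mult_left_mono) auto
  also have "\<dots> = v\<^sup>2"
    using circle by (simp add: algebra_simps power2_eq_square abs_mult_self_eq)
  finally show ?thesis using R by (simp add: pos_le_divide_eq)
qed

text \<open>The possible values \<open>(2m - N)/N\<close> of a normalised difference of two cluster sizes.\<close>
definition levels :: "nat \<Rightarrow> real set" where
  "levels N = (\<lambda>m. (2 * real m - real N) / real N) ` {..N}"

lemma finite_levels: "finite (levels N)"
  by (simp add: levels_def)

definition phase_level :: "nat \<Rightarrow> (nat \<Rightarrow> real) \<Rightarrow> real" where
  "phase_level N x = (2 * real (card {j. j < N \<and> alignment N x j \<ge> 0}) - real N) / real N"

text \<open>There are only finitely many levels, independently of the configuration.\<close>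
lemma phase_level_in_levels: "phase_level N x \<in> levels N"
proof -
  have "card {j. j < N \<and> alignment N x j \<ge> 0} \<le> N"
    using card_mono[of "{..<N}" "{j. j < N \<and> alignment N x j \<ge> 0}"] by auto
  then show ?thesis unfolding levels_def phase_level_def by auto
qed

lemma order_param_near_level:
  assumes N: "N > 0" and pos: "order_sq N x > 0"
  shows "\<bar>sqrt (order_sq N x) - phase_level N x\<bar> \<le> speed_sq N x / (real N * order_sq N x)"
proof -
  define R where "R = sqrt (order_sq N x)"
  define \<sigma> where "\<sigma> j = (if alignment N x j \<ge> 0 then 1 else -1 :: real)" for j
  have R: "R > 0" "R\<^sup>2 = order_sq N x" using pos by (simp_all add: R_def)
  have "\<bar>real N * R\<^sup>2 - R * (\<Sum>j<N. \<sigma> j)\<bar> = \<bar>\<Sum>j<N. alignment N x j - R * \<sigma> j\<bar>"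
    by (simp add: R(2) sum_alignment[OF N] sum_subtractf sum_distrib_left)
  also have "\<dots> \<le> (\<Sum>j<N. \<bar>alignment N x j - R * \<sigma> j\<bar>)" by (rule sum_abs)
  also have "\<dots> \<le> (\<Sum>j<N. (kuramoto_rhs N x j)\<^sup>2 / R)"
    unfolding \<sigma>_def by (intro sum_mono sign_deviation R(1)) (simp add: R(2) alignment_rhs_sq)
  also have "\<dots> = speed_sq N x / R" by (simp add: sum_divide_distrib)
  finally have bound: "\<bar>real N * R\<^sup>2 - R * (\<Sum>j<N. \<sigma> j)\<bar> \<le> speed_sq N x / R" .
  have "real N * R\<^sup>2 - R * (\<Sum>j<N. \<sigma> j) = (real N * R) * (R - phase_level N x)"
    using N by (simp add: \<sigma>_def sum_signs phase_level_def field_simps power2_eq_square)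
  with bound have "(real N * R) * \<bar>R - phase_level N x\<bar> \<le> speed_sq N x / R"
    using R(1) by (simp add: abs_mult)
  then have "\<bar>R - phase_level N x\<bar> \<le> speed_sq N x / (real N * R\<^sup>2)"
    using N R(1) by (simp add: field_simps power2_eq_square)
  then show ?thesis by (simp add: R_def[symmetric] R(2))
qed

text \<open>Half-angle sines detect congruence; they are the building blocks of the cross ratio.\<close>
lemma cong_2pi_iff_sin_half: "cong_2pi a b \<longleftrightarrow> sin ((a - b) / 2) = 0"
proof
  assume "cong_2pi a b"
  then obtain m :: int where "a - b = 2 * pi * of_int m" unfolding cong_2pi_def by blast
  then have "(a - b) / 2 = of_int m * pi" by simp
  then show "sin ((a - b) / 2) = 0" by (simp add: sin_zero_iff_int2)
next
  assume "sin ((a - b) / 2) = 0"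
  then obtain m :: int where "(a - b) / 2 = of_int m * pi" by (auto simp: sin_zero_iff_int2)
  then have "a - b = 2 * pi * of_int m" by simp
  then show "cong_2pi a b" unfolding cong_2pi_def by blast
qed

lemma cong_2pi_refl: "cong_2pi a a"
  unfolding cong_2pi_def by (rule exI[of _ 0]) simp

lemma cong_2pi_common: "cong_2pi a p \<Longrightarrow> cong_2pi b p \<Longrightarrow> cong_2pi a b"
proof -
  assume "cong_2pi a p" "cong_2pi b p"
  then obtain m n :: int where "a - p = 2 * pi * of_int m" "b - p = 2 * pi * of_int n"
    unfolding cong_2pi_def by blast
  then have "a - b = 2 * pi * of_int (m - n)" by (simp add: algebra_simps)
  then show ?thesis unfolding cong_2pi_def by blast
qed

lemma cong_2pi_antipodal: "cong_2pi a p \<Longrightarrow> cong_2pi b (p + pi) \<Longrightarrow> \<not> cong_2pi a b"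
proof
  assume "cong_2pi a p" "cong_2pi b (p + pi)" "cong_2pi a b"
  then obtain m n k :: int where "a - p = 2 * pi * of_int m" "b - (p + pi) = 2 * pi * of_int n"
    "a - b = 2 * pi * of_int k" unfolding cong_2pi_def by blast
  then have "pi * 1 = pi * (2 * of_int (m - n - k))" by (simp add: algebra_simps)
  then have "(1::int) = 2 * (m - n - k)" by (simp del: of_int_mult add: of_int_eq_iff[symmetric])
  then show False by presburger
qed

lemma cos_cong_2pi: "cong_2pi a p \<Longrightarrow> cos (a - p) = 1"
  unfolding cong_2pi_def by auto

lemma cos_cong_2pi_antipodal: "cong_2pi a (p + pi) \<Longrightarrow> cos (a - p) = -1"
proof -
  assume "cong_2pi a (p + pi)"
  then obtain m :: int where "a - (p + pi) = 2 * pi * of_int m" unfolding cong_2pi_def by blast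
  then have "a - p = 2 * pi * of_int m + pi" by simp
  then show ?thesis by simp
qed

lemma sin_zero_cong_2pi_cases: "sin (a - p) = 0 \<Longrightarrow> cong_2pi a p \<or> cong_2pi a (p + pi)"
proof -
  assume "sin (a - p) = 0"
  then obtain m :: int where m: "a - p = of_int m * pi" by (auto simp: sin_zero_iff_int2)
  show ?thesis
  proof (cases "even m")
    case True
    then obtain n where "m = 2 * n" by (rule evenE)
    then have "a - p = 2 * pi * of_int n" using m by simp
    then show ?thesis unfolding cong_2pi_def by blast
  next
    case False
    then obtain n where "m = 2 * n + 1" by (rule oddE)
    then have "a - (p + pi) = 2 * pi * of_int n" using m by (simp add: algebra_simps)
    then show ?thesis unfolding cong_2pi_def by blast
  qed
qed

subsection \<open>Equilibria\<close>

lemma config_type_of_clusters: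
  assumes "\<And>j. j < N \<Longrightarrow> cong_2pi (x j) phi \<or> cong_2pi (x j) (phi + pi)"
  shows "config_type N (card {j. j < N \<and> \<not> cong_2pi (x j) phi}) x"
  unfolding config_type_def
proof (intro exI conjI)
  let ?I = "{j. j < N \<and> cong_2pi (x j) phi}"
  show "?I \<subseteq> {..<N}" by auto
  have "card ?I \<le> N" using card_mono[of "{..<N}" ?I] by auto
  then show "card ?I = N - card {j. j < N \<and> \<not> cong_2pi (x j) phi}"
    by (simp add: card_lessThan_compl)
  show "\<forall>i\<in>?I. cong_2pi (x i) phi" by simp
  show "\<forall>i\<in>{..<N} - ?I. cong_2pi (x i) (phi + pi)" using assms by auto
qed

text \<open>An equilibrium with \<open>R > 0\<close> consists of a cluster at \<open>\<phi>\<close> and a strictly smaller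
  cluster at \<open>\<phi> + \<pi>\<close>, since \<open>\<Sum>\<^sub>j R cos (x\<^sub>j - \<phi>) = N R\<^sup>2 > 0\<close>.\<close>
lemma stationary_two_clusters:
  assumes N: "N > 0" and stat: "\<And>i. i < N \<Longrightarrow> kuramoto_rhs N x i = 0"
    and pos: "order_sq N x > 0"
  obtains phi where "\<And>j. j < N \<Longrightarrow> cong_2pi (x j) phi \<or> cong_2pi (x j) (phi + pi)"
    and "2 * card {j. j < N \<and> \<not> cong_2pi (x j) phi} < N"
proof -
  define R where "R = sqrt (order_sq N x)"
  have R: "R > 0" "R\<^sup>2 = order_sq N x" using pos by (simp_all add: R_def)
  obtain phi where pc: "mean_cos N x = R * cos phi" and ps: "mean_sin N x = R * sin phi"
    using polar_form[of "mean_cos N x" "mean_sin N x"] unfolding R_def by metis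
  have clusters: "cong_2pi (x j) phi \<or> cong_2pi (x j) (phi + pi)" if "j < N" for j
  proof (rule sin_zero_cong_2pi_cases)
    have "- R * sin (x j - phi) = kuramoto_rhs N x j"
      by (simp add: kuramoto_rhs_mean_field pc ps sin_diff algebra_simps)
    then show "sin (x j - phi) = 0" using stat[OF that] R(1) by simp
  qed
  let ?J = "{j. j < N \<and> \<not> cong_2pi (x j) phi}"
  have "real N * R\<^sup>2 = (\<Sum>j<N. alignment N x j)" using sum_alignment[OF N] R(2) by simp
  also have "\<dots> = (\<Sum>j<N. R * (if cong_2pi (x j) phi then 1 else -1))"
  proof (intro sum.cong refl)
    fix j assume "j \<in> {..<N}"
    moreover have "alignment N x j = R * cos (x j - phi)"
      by (simp add: pc ps cos_diff algebra_simps)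
    ultimately show "alignment N x j = R * (if cong_2pi (x j) phi then 1 else -1)"
      using clusters[of j] cos_cong_2pi[of "x j" phi] cos_cong_2pi_antipodal[of "x j" phi]
      by auto
  qed
  also have "\<dots> = R * (2 * real (card {j. j < N \<and> cong_2pi (x j) phi}) - real N)"
    by (simp add: sum_distrib_left[symmetric] sum_signs)
  finally have "real N * R = 2 * real (card {j. j < N \<and> cong_2pi (x j) phi}) - real N"
    using R(1) by (simp add: power2_eq_square)
  moreover have "real N * R > 0" using N R(1) by simp
  ultimately have "N < 2 * card {j. j < N \<and> cong_2pi (x j) phi}" by linarith
  moreover have "card {j. j < N \<and> cong_2pi (x j) phi} \<le> N"
    using card_mono[of "{..<N}" "{j. j < N \<and> cong_2pi (x j) phi}"] by auto
  ultimately have "2 * card ?J < N" unfolding card_lessThan_compl by linarith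
  with clusters that show ?thesis by blast
qed

lemma half_angle_identity:
  fixes x y C S :: real
  shows "cos ((x - y) / 2) / 2 * ((S * cos x - C * sin x) - (S * cos y - C * sin y))
       = - ((C * cos x + S * sin x) + (C * cos y + S * sin y)) / 2 * sin ((x - y) / 2)"
proof -
  define p q where "p = x / 2" and "q = y / 2"
  have xy: "x = 2 * p" "y = 2 * q" and half: "(x - y) / 2 = p - q"
    by (simp_all add: p_def q_def diff_divide_distrib)
  have "(cos p)\<^sup>2 + (sin p)\<^sup>2 = 1" "(cos q)\<^sup>2 + (sin q)\<^sup>2 = 1" by simp_all
  then show ?thesis
    unfolding half unfolding xy cos_double sin_double cos_diff sin_diff by algebra
qed

section \<open>Facts from real analysis\<close>

lemma nondecreasing_if_deriv_nonneg:
  fixes f :: "real \<Rightarrow> real"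
  assumes cont: "continuous_on {T..} f"
    and deriv: "\<And>t. T < t \<Longrightarrow> (f has_real_derivative f' t) (at t)"
    and nonneg: "\<And>t. T < t \<Longrightarrow> 0 \<le> f' t"
    and "T \<le> a" "a \<le> b"
  shows "f a \<le> f b"
proof (rule DERIV_nonneg_imp_increasing_open[OF \<open>a \<le> b\<close>])
  show "continuous_on {a..b} f"
    by (rule continuous_on_subset[OF cont]) (use \<open>T \<le> a\<close> in auto)
  fix x assume "a < x" "x < b"
  then show "\<exists>y. (f has_real_derivative y) (at x) \<and> 0 \<le> y"
    using deriv nonneg \<open>T \<le> a\<close> by (intro exI[of _ "f' x"]) auto
qed

lemma constant_if_deriv_zero:
  fixes f :: "real \<Rightarrow> real"
  assumes cont: "continuous_on {T..} f"
    and deriv: "\<And>t. T < t \<Longrightarrow> (f has_real_derivative 0) (at t)" and "T \<le> t"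
  shows "f t = f T"
proof (rule DERIV_isconst2[of T "t + 1"])
  show "continuous_on {T..t + 1} f" by (rule continuous_on_subset[OF cont]) auto
qed (use deriv \<open>T \<le> t\<close> in auto)

lemma nondecreasing_bounded_tendsto:
  fixes f :: "real \<Rightarrow> real"
  assumes mono: "\<And>s t. T \<le> s \<Longrightarrow> s \<le> t \<Longrightarrow> f s \<le> f t"
    and bdd: "\<And>t. T \<le> t \<Longrightarrow> f t \<le> B"
  shows "(f \<longlongrightarrow> (SUP t\<in>{T..}. f t)) at_top"
    and "\<And>t. T \<le> t \<Longrightarrow> f t \<le> (SUP t\<in>{T..}. f t)"
proof -
  let ?L = "SUP t\<in>{T..}. f t"
  have bdd_above: "bdd_above (f ` {T..})" using bdd by (auto intro!: bdd_aboveI)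
  show upper: "f t \<le> ?L" if "T \<le> t" for t
    using bdd_above that by (intro cSUP_upper) auto
  show "(f \<longlongrightarrow> ?L) at_top"
  proof (rule tendstoI)
    fix e :: real assume e: "e > 0"
    then obtain t0 where t0: "T \<le> t0" "?L - e < f t0"
      using less_cSUP_iff[OF _ bdd_above, of "?L - e"] by auto
    show "\<forall>\<^sub>F t in at_top. dist (f t) ?L < e"
      using eventually_ge_at_top[of t0]
    proof eventually_elim
      case (elim t)
      then show ?case using mono[OF t0(1) elim] upper[of t] t0 by (simp add: dist_real_def)
    qed
  qed
qed

text \<open>A function whose speed is dominated by the rate of decrease of a nonnegative function
  has finite length, hence converges: \<open>u + g\<close> decreases and \<open>u - g\<close> increases.\<close>
lemma tendsto_if_deriv_dominated:
  fixes u g :: "real \<Rightarrow> real"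
  assumes cont_u: "continuous_on {T..} u" and cont_g: "continuous_on {T..} g"
    and du: "\<And>t. T < t \<Longrightarrow> (u has_real_derivative u' t) (at t)"
    and dg: "\<And>t. T < t \<Longrightarrow> (g has_real_derivative g' t) (at t)"
    and dominated: "\<And>t. T < t \<Longrightarrow> \<bar>u' t\<bar> \<le> - g' t"
    and g_nonneg: "\<And>t. T \<le> t \<Longrightarrow> 0 \<le> g t"
  shows "\<exists>L. (u \<longlongrightarrow> L) at_top"
proof -
  have rates: "0 \<le> - g' t" "0 \<le> u' t - g' t" "0 \<le> - (u' t + g' t)" if "T < t" for t
    using dominated[OF that] by (simp_all add: abs_le_iff)
  have mono_neg_g: "- g s \<le> - g t" if "T \<le> s" "s \<le> t" for s t
    using continuous_on_minus[OF cont_g] DERIV_minus[OF dg] rates(1) that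
    by (rule nondecreasing_if_deriv_nonneg)
  have mono_lower: "u s - g s \<le> u t - g t" if "T \<le> s" "s \<le> t" for s t
    using continuous_on_diff[OF cont_u cont_g] DERIV_diff[OF du dg] rates(2) that
    by (rule nondecreasing_if_deriv_nonneg)
  have mono_upper: "- (u s + g s) \<le> - (u t + g t)" if "T \<le> s" "s \<le> t" for s t
    using continuous_on_minus[OF continuous_on_add[OF cont_u cont_g]]
      DERIV_minus[OF DERIV_add[OF du dg]] rates(3) that
    by (rule nondecreasing_if_deriv_nonneg)
  have "((\<lambda>t. - g t) \<longlongrightarrow> (SUP t\<in>{T..}. - g t)) at_top"
    by (rule nondecreasing_bounded_tendsto(1)[OF mono_neg_g, where B = 0]) (use g_nonneg in auto)
  moreover have "((\<lambda>t. - (u t + g t)) \<longlongrightarrow> (SUP t\<in>{T..}. - (u t + g t))) at_top"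
  proof (rule nondecreasing_bounded_tendsto(1)[OF mono_upper])
    fix t assume "T \<le> t"
    then show "- (u t + g t) \<le> - (u T - g T)"
      using mono_lower[of T t] g_nonneg[of t] by simp
  qed
  ultimately have "((\<lambda>t. - (- (u t + g t)) + (- g t)) \<longlongrightarrow>
      - (SUP t\<in>{T..}. - (u t + g t)) + (SUP t\<in>{T..}. - g t)) at_top"
    by (intro tendsto_intros)
  then show ?thesis by auto
qed

lemma deriv_limit_zero:
  fixes f f' :: "real \<Rightarrow> real"
  assumes deriv: "\<And>t. T < t \<Longrightarrow> (f has_real_derivative f' t) (at t)"
    and lim_f: "(f \<longlongrightarrow> L) at_top" and lim_f': "(f' \<longlongrightarrow> w) at_top"
  shows "w = 0"
proof (rule ccontr)
  assume "w \<noteq> 0"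
  then have w: "\<bar>w\<bar> / 4 > 0" by simp
  have "\<forall>\<^sub>F t in at_top. dist (f' t) w < \<bar>w\<bar> / 4 \<and> dist (f t) L < \<bar>w\<bar> / 4 \<and> T < t"
    using tendstoD[OF lim_f' w] tendstoD[OF lim_f w] eventually_gt_at_top[of T]
    by (intro eventually_conj)
  then obtain t0 where t0: "\<And>t. t \<ge> t0 \<Longrightarrow> dist (f' t) w < \<bar>w\<bar> / 4 \<and> dist (f t) L < \<bar>w\<bar> / 4 \<and> T < t"
    unfolding eventually_at_top_linorder by blast
  have "\<exists>z. t0 < z \<and> z < t0 + 1 \<and> f (t0 + 1) - f t0 = (t0 + 1 - t0) * f' z"
  proof (rule MVT2)
    fix x assume "t0 \<le> x" "x \<le> t0 + 1"
    then show "(f has_real_derivative f' x) (at x)" using deriv t0[of x] by auto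
  qed simp
  then obtain z where z: "t0 < z" "f (t0 + 1) - f t0 = f' z" by auto
  have "dist (f' z) w < \<bar>w\<bar> / 4" "dist (f (t0 + 1)) L < \<bar>w\<bar> / 4" "dist (f t0) L < \<bar>w\<bar> / 4"
    using t0[of z] t0[of "t0 + 1"] t0[of t0] z(1) by auto
  then show False using z(2) by (simp add: dist_real_def abs_if split: if_splits)
qed

text \<open>Uniqueness for the linear equation \<open>f' = h f\<close> with \<open>h\<close> bounded above:
  \<open>f\<^sup>2 e\<^sup>-\<^sup>2\<^sup>B\<^sup>t\<close> is nonincreasing.\<close>
lemma linear_ode_zero:
  fixes f h :: "real \<Rightarrow> real"
  assumes cont: "continuous_on {a..} f"
    and deriv: "\<And>t. a < t \<Longrightarrow> (f has_real_derivative h t * f t) (at t)"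
    and bound: "\<And>t. a < t \<Longrightarrow> h t \<le> B" and initial: "f a = 0" and "a \<le> t"
  shows "f t = 0"
proof -
  define V where "V s = - ((f s)\<^sup>2 * exp (- (2 * B * s)))" for s
  have dV: "(V has_real_derivative 2 * exp (- (2 * B * s)) * (f s)\<^sup>2 * (B - h s)) (at s)"
    if "a < s" for s
  proof -
    have "(V has_real_derivative - (2 * (h s * f s) * f s * exp (- (2 * B * s))
        + (f s)\<^sup>2 * (exp (- (2 * B * s)) * - (2 * B)))) (at s)"
      unfolding V_def
      by (rule derivative_eq_intros deriv that refl | simp)+
    then show ?thesis by (simp add: algebra_simps power2_eq_square)
  qed
  have "V a \<le> V t"
  proof (rule nondecreasing_if_deriv_nonneg[OF _ dV _ order_refl \<open>a \<le> t\<close>])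
    show "continuous_on {a..} V" unfolding V_def
      by (intro continuous_intros cont)
    show "0 \<le> 2 * exp (- (2 * B * s)) * (f s)\<^sup>2 * (B - h s)" if "a < s" for s
      using bound[OF that] by simp
  qed
  then have "(f t)\<^sup>2 * exp (- (2 * B * t)) \<le> 0" using initial by (simp add: V_def)
  then show ?thesis by (simp add: mult_le_0_iff)
qed

lemma eventually_away_from_lower_points:
  fixes r :: "'a \<Rightarrow> real"
  assumes fin: "finite \<Lambda>" and lim: "(r \<longlongrightarrow> \<rho>) F"
  obtains \<eta> where "\<eta> > 0" and "\<forall>\<^sub>F x in F. \<forall>l\<in>\<Lambda>. \<bar>r x - l\<bar> < \<eta> \<longrightarrow> \<rho> \<le> l"
proof -
  define \<eta> where "\<eta> = Min (insert 1 ((\<lambda>l. (\<rho> - l) / 2) ` {l\<in>\<Lambda>. l < \<rho>}))"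
  have fin': "finite (insert 1 ((\<lambda>l. (\<rho> - l) / 2) ` {l\<in>\<Lambda>. l < \<rho>}))" using fin by auto
  have \<eta>: "\<eta> > 0" unfolding \<eta>_def using fin' by (subst Min_gr_iff) auto
  have \<eta>_le: "\<eta> \<le> (\<rho> - l) / 2" if "l \<in> \<Lambda>" "l < \<rho>" for l
    unfolding \<eta>_def using fin' that by (intro Min_le) auto
  have "\<forall>\<^sub>F x in F. \<rho> - \<eta> < r x"
    using lim \<eta> by (intro order_tendstoD(1)) auto
  then have "\<forall>\<^sub>F x in F. \<forall>l\<in>\<Lambda>. \<bar>r x - l\<bar> < \<eta> \<longrightarrow> \<rho> \<le> l"
  proof eventually_elim
    case (elim x)
    show ?case
    proof (intro ballI impI)
      fix l assume l: "l \<in> \<Lambda>" and near: "\<bar>r x - l\<bar> < \<eta>"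
      show "\<rho> \<le> l"
      proof (rule ccontr)
        assume "\<not> \<rho> \<le> l"
        then have "\<eta> \<le> (\<rho> - l) / 2" using \<eta>_le[OF l] by simp
        then show False using elim near by (simp add: abs_less_iff)
      qed
    qed
  qed
  with \<eta> that show ?thesis by blast
qed

lemma gap_bound:
  fixes R L \<rho> \<delta> \<eta> :: real
  assumes R: "0 \<le> R" and \<rho>: "\<rho> \<le> 1" and \<eta>: "\<eta> > 0"
    and close: "\<bar>R - L\<bar> \<le> \<delta>" and gap: "\<bar>R - L\<bar> < \<eta> \<Longrightarrow> \<rho> \<le> L"
  shows "\<rho> - R \<le> (1 + 1 / \<eta>) * \<delta>"
proof -
  have \<delta>: "0 \<le> \<delta>" using close by linarith
  show ?thesis
  proof (cases "\<delta> < \<eta>")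
    case True
    then have "\<rho> \<le> L" using close by (intro gap) linarith
    then have "\<rho> - R \<le> \<delta>" using close by (simp add: abs_le_iff)
    moreover have "0 \<le> \<delta> / \<eta>" using \<delta> \<eta> by simp
    ultimately show ?thesis by (simp add: algebra_simps)
  next
    case False
    then have "1 \<le> \<delta> / \<eta>" using \<eta> by simp
    then show ?thesis using R \<rho> \<delta> by (simp add: algebra_simps)
  qed
qed

lemma product_bound:
  fixes v G K E :: real
  assumes v: "v\<^sup>2 \<le> E" and G: "G\<^sup>2 \<le> K * E" and K: "0 \<le> K"
  shows "\<bar>v\<bar> * G \<le> (K + 1) * E"
proof -
  have E: "0 \<le> E" using v zero_le_power2[of v] by linarith
  have "(\<bar>v\<bar> * G)\<^sup>2 = v\<^sup>2 * G\<^sup>2" by (simp add: power_mult_distrib)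
  also have "\<dots> \<le> E * (K * E)" by (rule mult_mono[OF v G]) (use E in simp_all)
  also have "\<dots> \<le> ((K + 1) * E)\<^sup>2"
  proof -
    have "((K + 1) * E)\<^sup>2 = E * (K * E) + (K\<^sup>2 + K + 1) * E\<^sup>2"
      by (simp add: power2_eq_square algebra_simps)
    moreover have "0 \<le> (K\<^sup>2 + K + 1) * E\<^sup>2" using K by simp
    ultimately show ?thesis by linarith
  qed
  finally show ?thesis by (rule power2_le_imp_le) (use E K in simp)
qed

locale kuramoto_solution =
  fixes N :: nat and theta :: "real \<Rightarrow> nat \<Rightarrow> real"
  assumes solution: "is_solution N theta" and N_pos: "N > 0"
begin

abbreviation R2 :: "real \<Rightarrow> real" where "R2 t \<equiv> order_sq N (theta t)"
abbreviation V2 :: "real \<Rightarrow> real" where "V2 t \<equiv> speed_sq N (theta t)"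

text \<open>Off the initial time, the one-sided derivative of the definition is a two-sided one.\<close>
lemma theta_deriv:
  assumes "j < N" "0 < t"
  shows "((\<lambda>s. theta s j) has_real_derivative kuramoto_rhs N (theta t) j) (at t)"
proof -
  have "((\<lambda>s. theta s j) has_real_derivative kuramoto_rhs N (theta t) j) (at t within {0..})"
    using solution assms unfolding is_solution_def by auto
  moreover have "at t within {0..} = at t"
    using assms(2) by (intro at_within_interior) (simp add: interior_Ici[of "-1"])
  ultimately show ?thesis by simp
qed

lemma theta_cont: "j < N \<Longrightarrow> continuous_on {0..} (\<lambda>s. theta s j)"
  using solution unfolding is_solution_def by (intro DERIV_continuous_on) auto

lemma R2_cont: "continuous_on {0..} R2"
  unfolding mean_cos_def mean_sin_def
  by (intro continuous_on_add continuous_on_power continuous_on_divide continuous_on_sum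
      continuous_on_cos continuous_on_sin theta_cont continuous_on_const) (use N_pos in auto)

lemma R2_deriv:
  assumes t: "0 < t"
  shows "(R2 has_real_derivative 2 / real N * V2 t) (at t)"
proof -
  let ?C = "mean_cos N (theta t)" and ?S = "mean_sin N (theta t)"
  let ?v = "\<lambda>j. kuramoto_rhs N (theta t) j"
  let ?dC = "- (\<Sum>j<N. sin (theta t j) * ?v j) / N" and ?dS = "(\<Sum>j<N. cos (theta t j) * ?v j) / N"
  have dC: "((\<lambda>s. mean_cos N (theta s)) has_real_derivative ?dC) (at t)"
    unfolding mean_cos_def using t N_pos by (auto intro!: derivative_eq_intros theta_deriv simp: sum_negf)
  have dS: "((\<lambda>s. mean_sin N (theta s)) has_real_derivative ?dS) (at t)"
    unfolding mean_sin_def using t N_pos by (auto intro!: derivative_eq_intros theta_deriv)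
  have dR2: "(R2 has_real_derivative 2 * ?C * ?dC + 2 * ?S * ?dS) (at t)"
    using DERIV_add[OF DERIV_power[OF dC, of 2] DERIV_power[OF dS, of 2]] by (simp add: algebra_simps)
  have "V2 t = (\<Sum>j<N. ?v j * (?S * cos (theta t j) - ?C * sin (theta t j)))"
    by (intro sum.cong refl) (simp add: kuramoto_rhs_mean_field[symmetric] power2_eq_square)
  also have "\<dots> = ?S * (\<Sum>j<N. cos (theta t j) * ?v j) - ?C * (\<Sum>j<N. sin (theta t j) * ?v j)"
    by (simp add: sum_distrib_left sum_subtractf algebra_simps)
  finally have V2_eq: "V2 t = ?S * (\<Sum>j<N. cos (theta t j) * ?v j) - ?C * (\<Sum>j<N. sin (theta t j) * ?v j)" .
  have "2 * ?C * ?dC + 2 * ?S * ?dS = 2 / real N * V2 t"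
    unfolding V2_eq by (simp add: divide_inverse algebra_simps)
  with dR2 show ?thesis by (rule DERIV_cong)
qed

lemma R2_mono: "0 \<le> s \<Longrightarrow> s \<le> t \<Longrightarrow> R2 s \<le> R2 t"
  by (rule nondecreasing_if_deriv_nonneg[OF R2_cont R2_deriv]) (simp_all add: sum_nonneg)

definition R2_lim :: real where "R2_lim = (SUP t\<in>{0..}. R2 t)"

lemma R2_tendsto: "(R2 \<longlongrightarrow> R2_lim) at_top"
  and R2_le_lim: "0 \<le> t \<Longrightarrow> R2 t \<le> R2_lim"
  unfolding R2_lim_def using nondecreasing_bounded_tendsto[OF R2_mono order_sq_le_1] by auto

lemma R2_lim_le_1: "R2_lim \<le> 1"
  unfolding R2_lim_def by (rule cSUP_least) (auto intro: order_sq_le_1)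

text \<open>Once \<open>R\<^sup>2\<close> attains its limit it is constant, so the velocities vanish.\<close>
lemma V2_zero_after_max:
  assumes "0 \<le> t\<^sub>1" "R2 t\<^sub>1 = R2_lim" "t\<^sub>1 < t"
  shows "V2 t = 0"
proof -
  have "2 / real N * V2 t = 0"
  proof (rule DERIV_local_max[OF R2_deriv])
    show "0 < t" "0 < t - t\<^sub>1" using assms by simp_all
    show "\<forall>y. \<bar>t - y\<bar> < t - t\<^sub>1 \<longrightarrow> R2 y \<le> R2 t"
    proof (intro allI impI)
      fix y assume "\<bar>t - y\<bar> < t - t\<^sub>1"
      then have "R2 y \<le> R2_lim" using assms by (intro R2_le_lim) auto
      moreover have "R2 t\<^sub>1 \<le> R2 t" using assms by (intro R2_mono) auto
      ultimately show "R2 y \<le> R2 t" using assms(2) by simp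
    qed
  qed
  then show ?thesis using N_pos by simp
qed

subsection \<open>The cross ratio of half-angle sines\<close>

abbreviation half_sin :: "real \<Rightarrow> nat \<Rightarrow> nat \<Rightarrow> real" where
  "half_sin t a b \<equiv> sin ((theta t a - theta t b) / 2)"

lemma half_sin_deriv:
  assumes "a < N" "b < N" "0 < t"
  shows "((\<lambda>s. half_sin s a b) has_real_derivative
           - (alignment N (theta t) a + alignment N (theta t) b) / 2 * half_sin t a b) (at t)"
proof -
  have "((\<lambda>s. half_sin s a b) has_real_derivative
      cos ((theta t a - theta t b) / 2) * ((kuramoto_rhs N (theta t) a - kuramoto_rhs N (theta t) b) / 2)) (at t)"
    by (intro DERIV_fun_sin DERIV_cdivide DERIV_diff theta_deriv assms)
  then show ?thesis
    using half_angle_identity[of "theta t a" "theta t b" "mean_sin N (theta t)" "mean_cos N (theta t)"]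
    by (simp add: kuramoto_rhs_mean_field)
qed

text \<open>A product of two half-angle sines over four indices satisfies a linear equation
  whose coefficient depends only on the set of the four indices.\<close>
lemma half_sin_product_deriv:
  assumes "a < N" "b < N" "c < N" "d < N" "0 < t"
  shows "((\<lambda>s. half_sin s a b * half_sin s c d) has_real_derivative
           - (alignment N (theta t) a + alignment N (theta t) b + alignment N (theta t) c
              + alignment N (theta t) d) / 2 * (half_sin t a b * half_sin t c d)) (at t)"
proof -
  have "((\<lambda>s. half_sin s a b * half_sin s c d) has_real_derivative
      half_sin t a b * (- (alignment N (theta t) c + alignment N (theta t) d) / 2 * half_sin t c d)
      + (- (alignment N (theta t) a + alignment N (theta t) b) / 2 * half_sin t a b) * half_sin t c d) (at t)"
    by (intro DERIV_mult' half_sin_deriv assms)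
  then show ?thesis by (rule DERIV_cong) (simp add: field_simps)
qed

lemma half_sin_cont: "a < N \<Longrightarrow> b < N \<Longrightarrow> continuous_on {0..} (\<lambda>s. half_sin s a b)"
  by (intro continuous_on_sin continuous_on_divide continuous_on_diff theta_cont continuous_on_const)
    auto

text \<open>The cross ratio \<open>(s\<^sub>i\<^sub>1\<^sub>i\<^sub>2 s\<^sub>j\<^sub>1\<^sub>j\<^sub>2) / (s\<^sub>i\<^sub>1\<^sub>j\<^sub>1 s\<^sub>i\<^sub>2\<^sub>j\<^sub>2)\<close> is a constant of motion:
  numerator and denominator obey the same linear equation.\<close>
lemma cross_ratio_invariant:
  assumes idx: "i\<^sub>1 < N" "i\<^sub>2 < N" "j\<^sub>1 < N" "j\<^sub>2 < N" and t: "0 \<le> t"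
  defines "P \<equiv> \<lambda>s. half_sin s i\<^sub>1 i\<^sub>2 * half_sin s j\<^sub>1 j\<^sub>2"
    and "M \<equiv> \<lambda>s. half_sin s i\<^sub>1 j\<^sub>1 * half_sin s i\<^sub>2 j\<^sub>2"
  shows "P t * M 0 = M t * P 0"
proof -
  define h where "h s = - (alignment N (theta s) i\<^sub>1 + alignment N (theta s) i\<^sub>2
    + alignment N (theta s) j\<^sub>1 + alignment N (theta s) j\<^sub>2) / 2" for s
  have dP: "(P has_real_derivative h s * P s) (at s)" if "0 < s" for s
    unfolding P_def h_def using half_sin_product_deriv[OF idx that] by simp
  have dM: "(M has_real_derivative h s * M s) (at s)" if "0 < s" for s
    unfolding M_def h_def using half_sin_product_deriv[OF idx(1,3,2,4) that] by (simp add: algebra_simps)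
  have "M 0 * P t - P 0 * M t = 0"
  proof (rule linear_ode_zero[where h = h and B = 2, OF _ _ _ _ t])
    show "continuous_on {0..} (\<lambda>s. M 0 * P s - P 0 * M s)" unfolding P_def M_def
      by (intro continuous_on_diff continuous_on_mult continuous_on_const half_sin_cont idx)
    show "((\<lambda>s. M 0 * P s - P 0 * M s) has_real_derivative h s * (M 0 * P s - P 0 * M s)) (at s)"
      if "0 < s" for s
      using DERIV_diff[OF DERIV_cmult[OF dP[OF that]] DERIV_cmult[OF dM[OF that]]]
      by (rule DERIV_cong) (simp add: algebra_simps)
    have bound: "- (a + b + c + d) / 2 \<le> 2" if "\<bar>a\<bar> \<le> 1" "\<bar>b\<bar> \<le> 1" "\<bar>c\<bar> \<le> 1" "\<bar>d\<bar> \<le> 1"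
      for a b c d :: real
      using that by (simp add: abs_le_iff)
    show "h s \<le> 2" for s
      unfolding h_def by (rule bound) (rule abs_alignment_le_1)+
  qed simp
  then show ?thesis by (simp add: algebra_simps)
qed

end

locale nonstationary_solution = kuramoto_solution +
  assumes nonstationary: "\<not> is_stationary_solution N theta"
begin

text \<open>If \<open>R\<close> vanished for all positive times, all velocities would vanish and the solution
  would be stationary.\<close>
lemma R2_positive_somewhere: "\<exists>T>0. R2 T > 0"
proof (rule ccontr)
  assume no_pos: "\<not> (\<exists>T>0. R2 T > 0)"
  have rest: "kuramoto_rhs N (theta t) j = 0" if "0 < t" for t j
  proof -
    have "\<not> R2 t > 0" using no_pos that by blast
    moreover have "0 \<le> R2 t" by simp
    ultimately have "R2 t = 0" by linarith
    then have "mean_cos N (theta t) = 0" "mean_sin N (theta t) = 0"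
      by (simp_all add: add_nonneg_eq_0_iff)
    then show ?thesis by (simp add: kuramoto_rhs_mean_field)
  qed
  have const: "theta t i = theta 0 i" if "i < N" "0 \<le> t" for i t
  proof (rule constant_if_deriv_zero[OF theta_cont[OF that(1)] _ that(2)])
    fix s :: real assume "0 < s"
    then show "((\<lambda>s. theta s i) has_real_derivative 0) (at s)"
      using theta_deriv[OF that(1)] rest by simp
  qed
  have "is_stationary_solution N theta"
    unfolding is_stationary_solution_def
  proof (intro allI impI)
    fix i t assume "i < N" "0 \<le> (t::real)"
    then show "cong_2pi (theta t i) (theta 0 i)" using const cong_2pi_refl by metis
  qed
  with nonstationary show False by simp
qed

lemma R2_lim_pos: "R2_lim > 0"
proof -
  obtain T where "T > 0" "R2 T > 0" using R2_positive_somewhere by blast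
  then show ?thesis using R2_le_lim[of T] by simp
qed

text \<open>Once \<open>R\<close> is near \<open>R\<^sub>\<infinity>\<close>, it can only be near levels above \<open>R\<^sub>\<infinity>\<close>, and
  quantisation bounds \<open>R\<^sub>\<infinity> - R\<close> by the velocities.\<close>
lemma lojasiewicz: "\<exists>K\<ge>0. \<forall>\<^sub>F t in at_top. R2_lim - R2 t \<le> K * V2 t"
proof -
  obtain T0 where T0: "T0 > 0" "R2 T0 > 0" using R2_positive_somewhere by blast
  define d where "d = R2 T0"
  define \<rho> where "\<rho> = sqrt R2_lim"
  have "((\<lambda>t. sqrt (R2 t)) \<longlongrightarrow> \<rho>) at_top" unfolding \<rho>_def by (intro tendsto_real_sqrt R2_tendsto)
  then obtain \<eta> where \<eta>: "\<eta> > 0"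
    and gap: "\<forall>\<^sub>F t in at_top. \<forall>l\<in>levels N. \<bar>sqrt (R2 t) - l\<bar> < \<eta> \<longrightarrow> \<rho> \<le> l"
    using eventually_away_from_lower_points[OF finite_levels] by blast
  define K where "K = 2 * (1 + 1 / \<eta>) / (real N * d)"
  have d: "0 < d" using T0 by (simp add: d_def)
  have "K \<ge> 0" using \<eta> d N_pos by (simp add: K_def)
  moreover have "\<forall>\<^sub>F t in at_top. R2_lim - R2 t \<le> K * V2 t"
    using gap eventually_ge_at_top[of T0]
  proof eventually_elim
    case (elim t)
    define R where "R = sqrt (R2 t)"
    have d_le: "d \<le> R2 t" using R2_mono T0 elim(2) by (simp add: d_def)
    have le_lim: "R2 t \<le> R2_lim" using R2_le_lim T0 elim(2) by simp
    have "\<bar>R - phase_level N (theta t)\<bar> \<le> V2 t / (real N * R2 t)"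
      unfolding R_def using order_param_near_level[OF N_pos] d d_le by simp
    also have "\<dots> \<le> V2 t / (real N * d)"
      by (rule divide_left_mono) (use d d_le N_pos in \<open>simp_all add: sum_nonneg\<close>)
    finally have close: "\<bar>R - phase_level N (theta t)\<bar> \<le> V2 t / (real N * d)" .
    have R_le: "R \<le> \<rho>" "\<rho> \<le> 1" using le_lim R2_lim_le_1 by (simp_all add: R_def \<rho>_def)
    have gap_R: "\<rho> - R \<le> (1 + 1 / \<eta>) * (V2 t / (real N * d))"
    proof (rule gap_bound[OF _ R_le(2) \<eta> close])
      show "0 \<le> R" by (simp add: R_def)
      show "\<rho> \<le> phase_level N (theta t)" if "\<bar>R - phase_level N (theta t)\<bar> < \<eta>"
        using elim(1) phase_level_in_levels that by (auto simp: R_def)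
    qed
    have "R2_lim - R2 t = \<rho>\<^sup>2 - R\<^sup>2" using d d_le le_lim by (simp add: \<rho>_def R_def)
    also have "\<dots> = (\<rho> - R) * (\<rho> + R)" by (simp add: power2_eq_square algebra_simps)
    also have "\<dots> \<le> (\<rho> - R) * 2"
      by (rule mult_left_mono) (use R_le in \<open>simp_all add: R_def\<close>)
    also have "\<dots> \<le> (1 + 1 / \<eta>) * (V2 t / (real N * d)) * 2"
      using gap_R by (rule mult_right_mono) simp
    also have "\<dots> = K * V2 t" by (simp add: K_def)
    finally show ?case .
  qed
  ultimately show ?thesis by blast
qed

text \<open>If \<open>R\<^sup>2\<close> attains its limit at some time, the solution is at rest from then on.\<close>
lemma theta_converges_if_limit_attained:
  assumes j: "j < N" and t\<^sub>1: "0 \<le> t\<^sub>1" "R2 t\<^sub>1 = R2_lim"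
  shows "\<exists>L. ((\<lambda>t. theta t j) \<longlongrightarrow> L) at_top"
proof -
  have const: "theta t j = theta t\<^sub>1 j" if "t\<^sub>1 \<le> t" for t
  proof (rule constant_if_deriv_zero[OF continuous_on_subset[OF theta_cont[OF j]] _ that])
    fix s assume s: "t\<^sub>1 < s"
    then have "V2 s = 0" using V2_zero_after_max[OF t\<^sub>1 s] by simp
    then have "kuramoto_rhs N (theta s) j = 0" using j by (simp add: sum_nonneg_eq_0_iff)
    then show "((\<lambda>s. theta s j) has_real_derivative 0) (at s)"
      using theta_deriv[OF j, of s] s t\<^sub>1 by simp
  qed (use t\<^sub>1 in auto)
  have "((\<lambda>t. theta t j) \<longlongrightarrow> theta t\<^sub>1 j) at_top"
    by (rule tendsto_eventually[OF eventually_mono[OF eventually_ge_at_top const]])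
  then show ?thesis by blast
qed

text \<open>If \<open>R\<^sup>2 < R\<^sub>\<infinity>\<^sup>2\<close> for all large times, then \<open>G = \<surd>(R\<^sub>\<infinity>\<^sup>2 - R\<^sup>2)\<close> is positive with
  \<open>G' = -V2/(N G)\<close>, and the Lojasiewicz inequality \<open>G\<^sup>2 \<le> K V2\<close> gives
  \<open>|\<theta>\<^sub>j'| \<le> (K + 1) V2 / G = -N (K + 1) G'\<close>: the phase has finite length.\<close>
lemma theta_converges_if_limit_not_attained:
  assumes j: "j < N" and T: "T > 0" and K: "K \<ge> 0"
    and loj: "\<And>t. T \<le> t \<Longrightarrow> R2_lim - R2 t \<le> K * V2 t"
    and below: "\<And>t. T \<le> t \<Longrightarrow> R2 t < R2_lim"
  shows "\<exists>L. ((\<lambda>t. theta t j) \<longlongrightarrow> L) at_top"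
proof -
  define G where "G t = sqrt (R2_lim - R2 t)" for t
  have G_pos: "0 < G t" if "T \<le> t" for t using below[OF that] by (simp add: G_def)
  have dG: "(G has_real_derivative - (V2 t / (real N * G t))) (at t)" if "T < t" for t
  proof -
    have "(G has_real_derivative inverse (sqrt (R2_lim - R2 t)) / 2 * (0 - 2 / real N * V2 t)) (at t)"
      unfolding G_def using below[of t] that T
      by (intro DERIV_chain2[OF DERIV_real_sqrt DERIV_diff[OF DERIV_const R2_deriv]]) auto
    then show ?thesis by (rule DERIV_cong) (simp add: G_def field_simps)
  qed
  have speed: "\<bar>kuramoto_rhs N (theta t) j\<bar> \<le> (K + 1) * V2 t / G t" if "T < t" for t
  proof -
    have "\<bar>kuramoto_rhs N (theta t) j\<bar> * G t \<le> (K + 1) * V2 t"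
    proof (rule product_bound[OF _ _ K])
      show "(kuramoto_rhs N (theta t) j)\<^sup>2 \<le> V2 t" using j by (intro member_le_sum) auto
      show "(G t)\<^sup>2 \<le> K * V2 t" using loj[of t] below[of t] that by (simp add: G_def)
    qed
    then show ?thesis using G_pos[of t] that by (simp add: pos_le_divide_eq)
  qed
  show ?thesis
  proof (rule tendsto_if_deriv_dominated[where g = "\<lambda>t. real N * (K + 1) * G t"
        and u' = "\<lambda>t. kuramoto_rhs N (theta t) j" and g' = "\<lambda>t. - ((K + 1) * V2 t / G t)"])
    show "continuous_on {T..} (\<lambda>s. theta s j)"
      by (rule continuous_on_subset[OF theta_cont[OF j]]) (use T in auto)
    show "continuous_on {T..} (\<lambda>t. real N * (K + 1) * G t)" unfolding G_def
      by (intro continuous_on_mult continuous_on_const continuous_on_real_sqrt continuous_on_diff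
          continuous_on_subset[OF R2_cont]) (use T in auto)
    show "((\<lambda>s. theta s j) has_real_derivative kuramoto_rhs N (theta t) j) (at t)" if "T < t" for t
      using theta_deriv[OF j] that T by simp
    show "((\<lambda>t. real N * (K + 1) * G t) has_real_derivative - ((K + 1) * V2 t / G t)) (at t)"
      if "T < t" for t
      using DERIV_cmult[OF dG[OF that], of "real N * (K + 1)"]
      by (rule DERIV_cong) (use N_pos in simp)
    show "\<bar>kuramoto_rhs N (theta t) j\<bar> \<le> - (- ((K + 1) * V2 t / G t))" if "T < t" for t
      using speed[OF that] by simp
    show "0 \<le> real N * (K + 1) * G t" if "T \<le> t" for t using G_pos[OF that] K by simp
  qed
qed

lemma theta_converges:
  assumes j: "j < N"
  shows "\<exists>L. ((\<lambda>t. theta t j) \<longlongrightarrow> L) at_top"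
proof -
  obtain K T' where K: "K \<ge> 0" and loj: "\<And>t. T' \<le> t \<Longrightarrow> R2_lim - R2 t \<le> K * V2 t"
    using lojasiewicz unfolding eventually_at_top_linorder by blast
  define T where "T = max T' 1"
  show ?thesis
  proof (cases "\<exists>t\<^sub>1\<ge>T. R2 t\<^sub>1 = R2_lim")
    case True
    then obtain t\<^sub>1 where "T \<le> t\<^sub>1" "R2 t\<^sub>1 = R2_lim" by blast
    moreover have "0 \<le> T" by (simp add: T_def)
    ultimately have "0 \<le> t\<^sub>1" "R2 t\<^sub>1 = R2_lim" by simp_all
    then show ?thesis by (rule theta_converges_if_limit_attained[OF j])
  next
    case False
    have below: "R2 t < R2_lim" if "T \<le> t" for t
      using R2_le_lim[of t] False that by (fastforce simp: T_def)
    have "0 < T" "\<And>t. T \<le> t \<Longrightarrow> R2_lim - R2 t \<le> K * V2 t"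
      using loj by (simp_all add: T_def)
    then show ?thesis using theta_converges_if_limit_not_attained[OF j _ K _ below] by blast
  qed
qed

subsection \<open>The limit configuration\<close>

definition theta_lim :: "nat \<Rightarrow> real" where
  "theta_lim j = Lim at_top (\<lambda>t. theta t j)"

lemma theta_tendsto:
  assumes "j < N"
  shows "((\<lambda>t. theta t j) \<longlongrightarrow> theta_lim j) at_top"
proof -
  obtain L where L: "((\<lambda>t. theta t j) \<longlongrightarrow> L) at_top" using theta_converges[OF assms] by blast
  then have "theta_lim j = L" unfolding theta_lim_def by (intro tendsto_Lim) simp_all
  with L show ?thesis by simp
qed

text \<open>The limit is an equilibrium, since the velocities converge and the phases do.\<close>
lemma theta_lim_stationary:
  assumes j: "j < N"
  shows "kuramoto_rhs N theta_lim j = 0"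
proof (rule deriv_limit_zero[OF theta_deriv[OF j] theta_tendsto[OF j]])
  show "((\<lambda>t. kuramoto_rhs N (theta t) j) \<longlongrightarrow> kuramoto_rhs N theta_lim j) at_top"
    unfolding kuramoto_rhs_def
    by (intro tendsto_intros theta_tendsto j) auto
qed

lemma order_sq_theta_lim: "order_sq N theta_lim = R2_lim"
proof (rule tendsto_unique[OF _ _ R2_tendsto])
  show "(R2 \<longlongrightarrow> order_sq N theta_lim) at_top"
    unfolding mean_cos_def mean_sin_def by (intro tendsto_intros theta_tendsto) (use N_pos in auto)
qed simp

lemma limit_two_clusters:
  obtains phi where "\<And>j. j < N \<Longrightarrow> cong_2pi (theta_lim j) phi \<or> cong_2pi (theta_lim j) (phi + pi)"
    and "2 * card {j. j < N \<and> \<not> cong_2pi (theta_lim j) phi} < N"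
  using stationary_two_clusters[OF N_pos theta_lim_stationary] order_sq_theta_lim R2_lim_pos
  by metis

text \<open>For pairwise distinct initial phases, the limit cannot contain two phases at \<open>\<phi>\<close> and two
  at \<open>\<phi> + \<pi>\<close>: the cross ratio would tend to \<open>0\<close>, but it is constant and nonzero.\<close>
lemma no_two_antipodal_pairs:
  assumes distinct: "\<forall>i<N. \<forall>j<N. i \<noteq> j \<longrightarrow> \<not> cong_2pi (theta 0 i) (theta 0 j)"
    and idx: "i\<^sub>1 < N" "i\<^sub>2 < N" "j\<^sub>1 < N" "j\<^sub>2 < N" "i\<^sub>1 \<noteq> i\<^sub>2" "j\<^sub>1 \<noteq> j\<^sub>2"
    and at_phi: "cong_2pi (theta_lim i\<^sub>1) phi" "cong_2pi (theta_lim i\<^sub>2) phi"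
    and at_antipode: "cong_2pi (theta_lim j\<^sub>1) (phi + pi)" "cong_2pi (theta_lim j\<^sub>2) (phi + pi)"
  shows False
proof -
  define P where "P = (\<lambda>s. half_sin s i\<^sub>1 i\<^sub>2 * half_sin s j\<^sub>1 j\<^sub>2)"
  define M where "M = (\<lambda>s. half_sin s i\<^sub>1 j\<^sub>1 * half_sin s i\<^sub>2 j\<^sub>2)"
  let ?half_lim = "\<lambda>a b. sin ((theta_lim a - theta_lim b) / 2)"
  have lim: "((\<lambda>s. half_sin s a b) \<longlongrightarrow> ?half_lim a b) at_top" if "a < N" "b < N" for a b
    by (intro tendsto_intros theta_tendsto that) simp
  have P0: "P 0 \<noteq> 0"
    using distinct idx by (simp add: P_def cong_2pi_iff_sin_half)
  have P_lim: "(P \<longlongrightarrow> 0) at_top"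
  proof -
    have "?half_lim i\<^sub>1 i\<^sub>2 = 0" using cong_2pi_common[OF at_phi] by (simp add: cong_2pi_iff_sin_half)
    then show ?thesis using tendsto_mult[OF lim[OF idx(1,2)] lim[OF idx(3,4)]] by (simp add: P_def)
  qed
  have M_lim: "(M \<longlongrightarrow> ?half_lim i\<^sub>1 j\<^sub>1 * ?half_lim i\<^sub>2 j\<^sub>2) at_top"
    unfolding M_def using idx by (intro tendsto_mult lim)
  have M_lim_nonzero: "?half_lim i\<^sub>1 j\<^sub>1 * ?half_lim i\<^sub>2 j\<^sub>2 \<noteq> 0"
    using cong_2pi_antipodal[OF at_phi(1) at_antipode(1)] cong_2pi_antipodal[OF at_phi(2) at_antipode(2)]
    by (simp add: cong_2pi_iff_sin_half)
  have to_zero: "((\<lambda>t. M t * P 0) \<longlongrightarrow> 0 * M 0) at_top"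
  proof (rule Lim_transform_eventually[OF tendsto_mult[OF P_lim tendsto_const]])
    show "\<forall>\<^sub>F t in at_top. P t * M 0 = M t * P 0"
      using eventually_ge_at_top[of 0]
      by eventually_elim (simp add: P_def M_def cross_ratio_invariant idx(1-4))
  qed
  have "((\<lambda>t. M t * P 0) \<longlongrightarrow> ?half_lim i\<^sub>1 j\<^sub>1 * ?half_lim i\<^sub>2 j\<^sub>2 * P 0) at_top"
    by (intro tendsto_mult M_lim tendsto_const)
  from tendsto_unique[OF _ this to_zero] have "?half_lim i\<^sub>1 j\<^sub>1 * ?half_lim i\<^sub>2 j\<^sub>2 * P 0 = 0"
    by simp
  with M_lim_nonzero P0 show False by simp
qed

lemma antipodal_cluster_le_1:
  assumes distinct: "\<forall>i<N. \<forall>j<N. i \<noteq> j \<longrightarrow> \<not> cong_2pi (theta 0 i) (theta 0 j)"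
    and clusters: "\<And>j. j < N \<Longrightarrow> cong_2pi (theta_lim j) phi \<or> cong_2pi (theta_lim j) (phi + pi)"
    and minority: "2 * card {j. j < N \<and> \<not> cong_2pi (theta_lim j) phi} < N"
  shows "card {j. j < N \<and> \<not> cong_2pi (theta_lim j) phi} \<le> 1"
proof (rule ccontr)
  let ?I = "{j. j < N \<and> cong_2pi (theta_lim j) phi}"
  let ?J = "{j. j < N \<and> \<not> cong_2pi (theta_lim j) phi}"
  have two: "\<exists>a\<in>A. \<exists>b\<in>A. a \<noteq> b" if "1 < card A" for A :: "nat set"
    using that card_le_Suc0_iff_eq[of A] card_ge_0_finite[of A] by auto
  assume "\<not> card ?J \<le> 1"
  moreover have "card ?I = N - card ?J"
    using card_lessThan_compl[of N "\<lambda>j. \<not> cong_2pi (theta_lim j) phi"]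
      card_mono[of "{..<N}" ?I] by auto
  ultimately have "1 < card ?I" "1 < card ?J" using minority by auto
  then obtain i\<^sub>1 i\<^sub>2 j\<^sub>1 j\<^sub>2 where "i\<^sub>1 \<in> ?I" "i\<^sub>2 \<in> ?I" "i\<^sub>1 \<noteq> i\<^sub>2" "j\<^sub>1 \<in> ?J" "j\<^sub>2 \<in> ?J" "j\<^sub>1 \<noteq> j\<^sub>2"
    using two by meson
  then show False
    using no_two_antipodal_pairs[OF distinct, of i\<^sub>1 i\<^sub>2 j\<^sub>1 j\<^sub>2 phi] clusters by auto
qed

end

theorem theorem2p4:
  fixes N :: nat and theta :: "real \<Rightarrow> nat \<Rightarrow> real"
  assumes "N \<ge> 2"
    and "is_solution N theta"
    and "\<not> is_stationary_solution N theta"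
  shows "\<exists>theta_star :: nat \<Rightarrow> real.
           (\<forall>j<N. ((\<lambda>t. theta t j) \<longlongrightarrow> theta_star j) at_top) \<and>
           (\<forall>i<N. kuramoto_rhs N theta_star i = 0) \<and>
           (\<exists>k::nat. 2 * k < N \<and> config_type N k theta_star \<and>
              ((\<forall>i<N. \<forall>j<N. i \<noteq> j \<longrightarrow> \<not> cong_2pi (theta 0 i) (theta 0 j))
                 \<longrightarrow> k \<le> 1))"
proof -
  interpret nonstationary_solution N theta
    by unfold_locales (use assms in auto)
  obtain phi where clusters: "\<And>j. j < N \<Longrightarrow> cong_2pi (theta_lim j) phi \<or> cong_2pi (theta_lim j) (phi + pi)"
    and minority: "2 * card {j. j < N \<and> \<not> cong_2pi (theta_lim j) phi} < N"
    using limit_two_clusters by blast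
  have "config_type N (card {j. j < N \<and> \<not> cong_2pi (theta_lim j) phi}) theta_lim"
    using clusters by (rule config_type_of_clusters)
  moreover have "(\<forall>i<N. \<forall>j<N. i \<noteq> j \<longrightarrow> \<not> cong_2pi (theta 0 i) (theta 0 j))
      \<longrightarrow> card {j. j < N \<and> \<not> cong_2pi (theta_lim j) phi} \<le> 1"
    using antipodal_cluster_le_1 clusters minority by blast
  ultimately show ?thesis
    using theta_tendsto theta_lim_stationary minority by blast
qed

end
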